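(* Let $G=(V,E)$ be a finite connected simple graph with boundary $\delta V\subseteq V$ and rotation $\rho=(\rho_u)_{u\in V}$, let $G^{BU}$ be its blow-up graph with tails, and let $U$ be the facial quantum walk on $\mathbb{C}^{A^{BU}\cup A_{tl}}$ with coin $H=\begin{pmatrix}a&b\\c&d\end{pmatrix}$, where $H$ is unitary, $abcd\neq 0$ and $d\in\mathbb{R}$; put $\omega=-\det H$ (all as defined in the context). Let $\Psi\in\mathbb{C}^{A^{BU}\cup A_{tl}}$ satisfy $U\Psi=\Psi$ and let $\psi$ be its restriction to $A^{BU}$. Let $u,u'\in V$ be adjacent in $G$, let $e_{br}\in A_{br}$ be the bridge arc from $(u,u')$ to $(u',u)$, and let $e_{is},\epsilon_{is}\in A_{is}(u)$ and $e'_{is},\epsilon'_{is}\in A_{is}(u')$ be the island arcs with $t(e_{is})=o(e_{br})=o(\epsilon_{is})$ and $t(e'_{is})=t(e_{br})=o(\epsilon'_{is})$. Then $$\psi(\epsilon_{is})=\omega\,\psi(e'_{is}),\qquad \psi(\epsilon'_{is})=\omega\,\psi(e_{is}),$$ and $$\psi(e_{br})=\frac{\omega}{b}\bigl(\psi(e_{is})+d\,\psi(e'_{is})\bigr),\qquad \psi(\bar e_{br})=\frac{\omega}{b}\bigl(\psi(e'_{is})+d\,\psi(e_{is})\bigr).$$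
   Context: Setting. $G=(V,E)$ is a finite connected simple graph and $\delta V\subseteq V$ a set of boundary vertices. To each $u\in\delta V$ a semi-infinite path (tail) is attached with origin $u$; let $\tau_u$ be the neighbour of $u$ on its tail. Let $\tilde N_u$ be the set of neighbours of $u$ in $G$, together with $\tau_u$ if $u\in\delta V$. A rotation is a family $\rho=(\rho_u)_{u\in V}$, where $\rho_u$ is a cyclic permutation of $\tilde N_u$ of length $|\tilde N_u|$. Blow-up graph. $V^{BU}=\{(u,v):u\in V,\ v\in\tilde N_u\}$. The arc set is $A^{BU}=A_{is}\sqcup A_{br}$: the island arcs $A_{is}$ are the arcs $(u,v)\to(u,\rho_u(v))$; the bridge arcs $A_{br}$ are the arcs $(u,v)\to(v,u)$ for $u,v\in V$ adjacent in $G$. For $e\in A_{br}$, $\bar e$ denotes the reverse bridge arc. $A_{is}(u)$ is the set of island arcs whose endpoints have first coordinate $u$. For an arc $e$, $o(e)$ and $t(e)$ denote its origin and terminus. Let $\delta V^{BU}=\{(u,\tau_u):u\in\delta V\}$. To each $x\in\delta V^{BU}$ a tail is attached: incoming arcs $e^x_0,e^x_1,\dots$ with $t(e^x_0)=x$ and $t(e^x_{j+1})=o(e^x_j)$, and their reverses $\bar e^x_0,\bar e^x_1,\dots$ (outgoing). $A_{tl}$ is the set of all tail arcs. Each $x\in V^{BU}$ has exactly one incoming and one outgoing island arc, and exactly one further incoming and one further outgoing arc (a bridge arc and its reverse if $x\notin\delta V^{BU}$; the tail arcs $e^x_0$ and $\bar e^x_0$ if $x\in\delta V^{BU}$). Facial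 quantum walk. $U$ acts on $\mathbb{C}^{A^{BU}\cup A_{tl}}$ by $(U\Psi)(e^x_j)=\Psi(e^x_{j+1})$ and $(U\Psi)(\bar e^x_{j+1})=\Psi(\bar e^x_j)$ for all $j\ge 0$ and $x\in\delta V^{BU}$. At every $x\in V^{BU}$, writing $e^{is}_+$ and $e^{br}_+$ for the incoming island and non-island arcs, and $e^{is}_-$ and $e^{br}_-$ for the outgoing island and non-island arcs, $$\begin{pmatrix}(U\Psi)(e^{is}_-)\\(U\Psi)(e^{br}_-)\end{pmatrix}=H\begin{pmatrix}\Psi(e^{is}_+)\\ \Psi(e^{br}_+)\end{pmatrix}.$$ *)

theory Defs
  imports Complex_Main "HOL-Combinatorics.Permutations"
begin

definition simple_graph :: "'v set \<Rightarrow> ('v \<Rightarrow> 'v \<Rightarrow> bool) \<Rightarrow> bool" where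
  "simple_graph V E \<longleftrightarrow> finite V \<and> (\<forall>u v. E u v \<longrightarrow> u \<in> V \<and> v \<in> V \<and> u \<noteq> v \<and> E v u)"

definition connected_graph :: "'v set \<Rightarrow> ('v \<Rightarrow> 'v \<Rightarrow> bool) \<Rightarrow> bool" where
  "connected_graph V E \<longleftrightarrow> (\<forall>u\<in>V. \<forall>v\<in>V. E\<^sup>*\<^sup>* u v)"

text \<open>Neighbours in the graph with tails: a neighbour is a vertex of G or the tail
  vertex tau_u (only present for boundary vertices u).\<close>
datatype 'v nb = Vert 'v | Tl

definition Ntilde :: "('v \<Rightarrow> 'v \<Rightarrow> bool) \<Rightarrow> 'v set \<Rightarrow> 'v \<Rightarrow> 'v nb set" where
  "Ntilde E B u = Vert ` {v. E u v} \<union> (if u \<in> B then {Tl} else {})"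

definition rotation :: "'v set \<Rightarrow> ('v \<Rightarrow> 'v \<Rightarrow> bool) \<Rightarrow> 'v set \<Rightarrow> ('v \<Rightarrow> 'v nb \<Rightarrow> 'v nb) \<Rightarrow> bool" where
  "rotation V E B rho \<longleftrightarrow> (\<forall>u\<in>V. rho u permutes Ntilde E B u \<and>
      (\<forall>x\<in>Ntilde E B u. \<forall>y\<in>Ntilde E B u. \<exists>n. (rho u ^^ n) x = y))"

text \<open>Isl u v : island arc (u,v) -> (u, rho_u v);
  Br u v  : bridge arc (u,Vert v) -> (v,Vert u);
  TIn u j : tail arc e^x_j (incoming towards x = (u,tau_u));
  TOut u j: tail arc \<bar>e^x_j (outgoing from x = (u,tau_u)).\<close>
datatype 'v arc = Isl 'v "'v nb" | Br 'v 'v | TIn 'v nat | TOut 'v nat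

definition A_is :: "('v \<Rightarrow> 'v \<Rightarrow> bool) \<Rightarrow> 'v set \<Rightarrow> 'v \<Rightarrow> 'v arc set" where
  "A_is E B u = {Isl u v | v. v \<in> Ntilde E B u}"

definition A_br :: "('v \<Rightarrow> 'v \<Rightarrow> bool) \<Rightarrow> 'v arc set" where
  "A_br E = {Br u v | u v. E u v}"

definition A_BU :: "'v set \<Rightarrow> ('v \<Rightarrow> 'v \<Rightarrow> bool) \<Rightarrow> 'v set \<Rightarrow> 'v arc set" where
  "A_BU V E B = (\<Union>u\<in>V. A_is E B u) \<union> A_br E"

definition A_tl :: "'v set \<Rightarrow> 'v arc set" where
  "A_tl B = {TIn u j | u j. u \<in> B} \<union> {TOut u j | u j. u \<in> B}"

text \<open>Origin and terminus of arcs of the blow-up graph (tail arcs are not needed).\<close>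
fun arc_o :: "('v \<Rightarrow> 'v nb \<Rightarrow> 'v nb) \<Rightarrow> 'v arc \<Rightarrow> 'v \<times> 'v nb" where
  "arc_o rho (Isl u v) = (u, v)"
| "arc_o rho (Br u v) = (u, Vert v)"
| "arc_o rho (TIn u j) = undefined"
| "arc_o rho (TOut u j) = undefined"

fun arc_t :: "('v \<Rightarrow> 'v nb \<Rightarrow> 'v nb) \<Rightarrow> 'v arc \<Rightarrow> 'v \<times> 'v nb" where
  "arc_t rho (Isl u v) = (u, rho u v)"
| "arc_t rho (Br u v) = (v, Vert u)"
| "arc_t rho (TIn u j) = undefined"
| "arc_t rho (TOut u j) = undefined"

fun rev_br :: "'v arc \<Rightarrow> 'v arc" where
  "rev_br (Br u v) = Br v u"
| "rev_br e = e"

definition in_isl :: "('v \<Rightarrow> 'v \<Rightarrow> bool) \<Rightarrow> 'v set \<Rightarrow> ('v \<Rightarrow> 'v nb \<Rightarrow> 'v nb) \<Rightarrow> 'v \<Rightarrow> 'v nb \<Rightarrow> 'v arc" where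
  "in_isl E B rho u v = Isl u (inv_into (Ntilde E B u) (rho u) v)"

definition in_nonisl :: "'v \<Rightarrow> 'v nb \<Rightarrow> 'v arc" where
  "in_nonisl u v = (case v of Vert w \<Rightarrow> Br w u | Tl \<Rightarrow> TIn u 0)"

text \<open>Facial quantum walk with coin H = [[a,b],[c,d]], as a map on functions
  'v arc => complex (only the values on A_BU \<union> A_tl are meaningful).\<close>
definition walk :: "('v \<Rightarrow> 'v \<Rightarrow> bool) \<Rightarrow> 'v set \<Rightarrow> ('v \<Rightarrow> 'v nb \<Rightarrow> 'v nb) \<Rightarrow>
    complex \<Rightarrow> complex \<Rightarrow> complex \<Rightarrow> complex \<Rightarrow> ('v arc \<Rightarrow> complex) \<Rightarrow> ('v arc \<Rightarrow> complex)" where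
  "walk E B rho a b c d \<Psi> e =
    (case e of
       TIn u j \<Rightarrow> \<Psi> (TIn u (Suc j))
     | TOut u j \<Rightarrow> (case j of
           0 \<Rightarrow> c * \<Psi> (in_isl E B rho u Tl) + d * \<Psi> (TIn u 0)
         | Suc k \<Rightarrow> \<Psi> (TOut u k))
     | Isl u v \<Rightarrow> a * \<Psi> (in_isl E B rho u v) + b * \<Psi> (in_nonisl u v)
     | Br u w \<Rightarrow> c * \<Psi> (in_isl E B rho u (Vert w)) + d * \<Psi> (Br w u))"

definition unitary2 :: "complex \<Rightarrow> complex \<Rightarrow> complex \<Rightarrow> complex \<Rightarrow> bool" where
  "unitary2 a b c d \<longleftrightarrow>
     cnj a * a + cnj c * c = 1 \<and> cnj a * b + cnj c * d = 0 \<and>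
     cnj b * a + cnj d * c = 0 \<and> cnj b * b + cnj d * d = 1 \<and>
     a * cnj a + b * cnj b = 1 \<and> a * cnj c + b * cnj d = 0 \<and>
     c * cnj a + d * cnj b = 0 \<and> c * cnj c + d * cnj d = 1"

end

theory Submission
  imports Defs
begin

text \<open>Write \<open>\<omega> = -(a d - b c)\<close>. At a bridge \<open>u \<rightarrow> u'\<close> the fixed-point equations of the two
  bridge arcs form a \<open>2\<times>2\<close> linear system whose determinant is \<open>1 - d\<^sup>2 = |b|\<^sup>2 \<noteq> 0\<close>;
  unitarity (\<open>c = \<omega> cnj b\<close>, and \<open>a = -\<omega> d\<close> for real \<open>d\<close>) turns its solution into the stated
  formulas, and substituting them into the island equations gives \<open>\<psi>(\<epsilon>\<^sub>i\<^sub>s) = \<omega> \<psi>(e'\<^sub>i\<^sub>s)\<close>.\<close>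

lemma unitary2_c_eq:
  assumes "unitary2 a b c d"
  shows "c = - (a * d - b * c) * cnj b"
proof -
  from assms have norm: "a * cnj a + b * cnj b = 1" and orth: "d * cnj b = - c * cnj a"
    unfolding unitary2_def by (auto simp: algebra_simps eq_neg_iff_add_eq_0)
  have "- (a * d - b * c) * cnj b = - a * (d * cnj b) + c * (b * cnj b)"
    by (simp add: algebra_simps)
  also have "\<dots> = c * (a * cnj a + b * cnj b)"
    using orth by (simp add: algebra_simps)
  finally show ?thesis
    using norm by simp
qed

lemma unitary2_one_minus_d_sq:
  assumes "unitary2 a b c d" and "d \<in> \<real>"
  shows "1 - d * d = b * cnj b"
  using assms by (auto simp: unitary2_def Reals_cnj_iff algebra_simps)

lemma unitary2_a_eq:
  assumes "unitary2 a b c d" and "d \<in> \<real>"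
  shows "a = (a * d - b * c) * d"
proof -
  have "cnj (cnj a * b + cnj c * d) = 0"
    using assms(1) unfolding unitary2_def by simp
  then have "a * cnj b + c * d = 0"
    using assms(2) by (simp add: Reals_cnj_iff)
  then have "a * (b * cnj b) + b * c * d = 0"
    by (metis mult.assoc mult.commute mult_zero_right distrib_left)
  then have "a * (1 - d * d) + b * c * d = 0"
    using unitary2_one_minus_d_sq[OF assms] by simp
  then show ?thesis
    by (simp add: algebra_simps eq_neg_iff_add_eq_0)
qed

lemma coin_system_solution:
  fixes a b c d p q X Y :: complex
  assumes "unitary2 a b c d" and "b \<noteq> 0" and "d \<in> \<real>"
    and "X = c * p + d * Y" and "Y = c * q + d * X"
  shows "X = - (a * d - b * c) / b * (p + d * q)"
proof -
  have "(1 - d * d) * X = c * (p + d * q)"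
    using assms(4,5) by (simp add: algebra_simps)
  then have "cnj b * (b * X) = cnj b * (- (a * d - b * c) * (p + d * q))"
    using unitary2_one_minus_d_sq[OF assms(1,3)] unitary2_c_eq[OF assms(1)]
    by (metis (no_types, lifting) mult.assoc mult.commute)
  then have "b * X = - (a * d - b * c) * (p + d * q)"
    using assms(2) by simp
  then show ?thesis
    using assms(2) by (simp add: field_simps)
qed

lemma coin_island_value:
  fixes a b c d p q Y :: complex
  assumes "unitary2 a b c d" and "b \<noteq> 0" and "d \<in> \<real>"
    and "Y = - (a * d - b * c) / b * (q + d * p)"
  shows "a * p + b * Y = - (a * d - b * c) * q"
proof -
  have "b * Y = - (a * d - b * c) * (q + d * p)"
    using assms(2,4) by simp
  then have "a * p + b * Y = - (a * d - b * c) * q + (a - (a * d - b * c) * d) * p"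
    by (simp add: algebra_simps)
  then show ?thesis
    using unitary2_a_eq[OF assms(1,3)] by simp
qed

lemma in_isl_rotation:
  assumes "rotation V E B rho" and "u \<in> V" and "x \<in> Ntilde E B u"
  shows "in_isl E B rho u (rho u x) = Isl u x"
proof -
  have "rho u permutes Ntilde E B u"
    using assms(1,2) unfolding rotation_def by blast
  then show ?thesis
    unfolding in_isl_def using assms(3) by (simp add: permutes_inj_on)
qed

lemma walk_fixpoint_at_bridge:
  assumes "simple_graph V E" and "rotation V E B rho"
    and fixpt: "\<forall>e \<in> A_BU V E B \<union> A_tl B. walk E B rho a b c d \<Psi> e = \<Psi> e"
    and "E u w" and "x \<in> Ntilde E B u" and "rho u x = Vert w"
  shows "\<Psi> (Isl u (Vert w)) = a * \<Psi> (Isl u x) + b * \<Psi> (Br w u)"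
    and "\<Psi> (Br u w) = c * \<Psi> (Isl u x) + d * \<Psi> (Br w u)"
proof -
  have "u \<in> V"
    using assms(1,4) unfolding simple_graph_def by blast
  then have in_isl: "in_isl E B rho u (Vert w) = Isl u x"
    using in_isl_rotation[OF assms(2) _ assms(5)] assms(6) by simp
  have "Vert w \<in> Ntilde E B u"
    using assms(4) unfolding Ntilde_def by simp
  then have "Isl u (Vert w) \<in> A_BU V E B" and "Br u w \<in> A_BU V E B"
    using \<open>u \<in> V\<close> assms(4) unfolding A_BU_def A_is_def A_br_def by blast+
  then have "walk E B rho a b c d \<Psi> (Isl u (Vert w)) = \<Psi> (Isl u (Vert w))"
    and "walk E B rho a b c d \<Psi> (Br u w) = \<Psi> (Br u w)"
    using fixpt by blast+
  then show "\<Psi> (Isl u (Vert w)) = a * \<Psi> (Isl u x) + b * \<Psi> (Br w u)"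
    and "\<Psi> (Br u w) = c * \<Psi> (Isl u x) + d * \<Psi> (Br w u)"
    using in_isl by (simp_all add: walk_def in_nonisl_def)
qed
theorem mainTheorem1:
  fixes V B :: "'v set" and E :: "'v \<Rightarrow> 'v \<Rightarrow> bool" and rho :: "'v \<Rightarrow> 'v nb \<Rightarrow> 'v nb"
    and a b c d :: complex and \<Psi> :: "'v arc \<Rightarrow> complex"
    and u u' :: 'v and e_br e_is eps_is e_is' eps_is' :: "'v arc"
  assumes "simple_graph V E" and "connected_graph V E" and "B \<subseteq> V"
    and "rotation V E B rho"
    and "unitary2 a b c d" and "a * b * c * d \<noteq> 0" and "d \<in> \<real>"
    and fixpt: "\<forall>e \<in> A_BU V E B \<union> A_tl B. walk E B rho a b c d \<Psi> e = \<Psi> e"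
    and "E u u'"
    and "e_br \<in> A_br E" and "arc_o rho e_br = (u, Vert u')" and "arc_t rho e_br = (u', Vert u)"
    and "e_is \<in> A_is E B u" and "eps_is \<in> A_is E B u"
    and "e_is' \<in> A_is E B u'" and "eps_is' \<in> A_is E B u'"
    and "arc_t rho e_is = arc_o rho e_br" and "arc_o rho eps_is = arc_o rho e_br"
    and "arc_t rho e_is' = arc_t rho e_br" and "arc_o rho eps_is' = arc_t rho e_br"
  shows "\<Psi> eps_is = (- (a * d - b * c)) * \<Psi> e_is'
       \<and> \<Psi> eps_is' = (- (a * d - b * c)) * \<Psi> e_is
       \<and> \<Psi> e_br = (- (a * d - b * c)) / b * (\<Psi> e_is + d * \<Psi> e_is')
       \<and> \<Psi> (rev_br e_br) = (- (a * d - b * c)) / b * (\<Psi> e_is' + d * \<Psi> e_is)"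
proof -
  have "E u' u" and "b \<noteq> 0"
    using assms(1,6,9) unfolding simple_graph_def by auto
  have e_br: "e_br = Br u u'"
    using assms(10,11) unfolding A_br_def by auto
  obtain x y where e_is: "e_is = Isl u x" "x \<in> Ntilde E B u" "rho u x = Vert u'"
    and e_is': "e_is' = Isl u' y" "y \<in> Ntilde E B u'" "rho u' y = Vert u"
    using assms(13,15,17,19) e_br unfolding A_is_def by auto
  have eps: "eps_is = Isl u (Vert u')" "eps_is' = Isl u' (Vert u)"
    using assms(14,16,18,20) e_br unfolding A_is_def by auto
  note at_u = walk_fixpoint_at_bridge[OF assms(1,4) fixpt \<open>E u u'\<close> e_is(2,3)]
  note at_u' = walk_fixpoint_at_bridge[OF assms(1,4) fixpt \<open>E u' u\<close> e_is'(2,3)]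
  have X: "\<Psi> (Br u u') = - (a * d - b * c) / b * (\<Psi> e_is + d * \<Psi> e_is')"
    using coin_system_solution[OF assms(5) \<open>b \<noteq> 0\<close> assms(7) at_u(2) at_u'(2)] e_is e_is' by simp
  have Y: "\<Psi> (Br u' u) = - (a * d - b * c) / b * (\<Psi> e_is' + d * \<Psi> e_is)"
    using coin_system_solution[OF assms(5) \<open>b \<noteq> 0\<close> assms(7) at_u'(2) at_u(2)] e_is e_is' by simp
  show ?thesis
    using coin_island_value[OF assms(5) \<open>b \<noteq> 0\<close> assms(7) Y]
      coin_island_value[OF assms(5) \<open>b \<noteq> 0\<close> assms(7) X]
      at_u(1) at_u'(1) e_is e_is' eps e_br X Y
    by simp
qed

end
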